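(* Let $t$ be a positive integer and $n=2t+1$. Then the locating chromatic number of the friendship graph $Fr_n$ is $1+\min\{k\in\mathbb{N}: t\le\binom{k}{2}\}$.
   Context: All graphs are finite and simple. The friendship graph $Fr_n$, $n=2t+1$, is the join of $K_1$ with $t$ disjoint copies of $K_2$, i.e. one central vertex adjacent to all vertices of $t$ disjoint edges. A proper $k$-coloring of $G$ is a map from $V(G)$ onto $[k]=\{1,\dots,k\}$ with adjacent vertices receiving different colors. For a connected graph $G$ with proper $k$-coloring $f$ and color classes $V_i=f^{-1}(i)$, the color code of $v$ is $(d(v,V_1),\dots,d(v,V_k))$, where $d(v,S)=\min_{x\in S}d(v,x)$; $f$ is a locating coloring if distinct vertices have distinct color codes, and the locating chromatic number $\chi_L(G)$ is the minimum number of colors in a locating coloring. *)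

theory Defs
  imports Main
begin

definition simple_graph :: "'a set \<Rightarrow> ('a \<times> 'a) set \<Rightarrow> bool" where
  "simple_graph V E \<longleftrightarrow> finite V \<and> E \<subseteq> V \<times> V \<and> sym E \<and> irrefl E"

definition connected_graph :: "'a set \<Rightarrow> ('a \<times> 'a) set \<Rightarrow> bool" where
  "connected_graph V E \<longleftrightarrow> V \<noteq> {} \<and> (\<forall>u\<in>V. \<forall>v\<in>V. \<exists>n. (u, v) \<in> E ^^ n)"

definition gdist :: "('a \<times> 'a) set \<Rightarrow> 'a \<Rightarrow> 'a \<Rightarrow> nat" where
  "gdist E u v = (LEAST n. (u, v) \<in> E ^^ n)"

definition setdist :: "('a \<times> 'a) set \<Rightarrow> 'a \<Rightarrow> 'a set \<Rightarrow> nat" where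
  "setdist E v S = Min ((\<lambda>x. gdist E v x) ` S)"

definition proper_coloring :: "'a set \<Rightarrow> ('a \<times> 'a) set \<Rightarrow> nat \<Rightarrow> ('a \<Rightarrow> nat) \<Rightarrow> bool" where
  "proper_coloring V E k f \<longleftrightarrow> f ` V = {1..k} \<and> (\<forall>(u, v)\<in>E. f u \<noteq> f v)"

definition color_code :: "'a set \<Rightarrow> ('a \<times> 'a) set \<Rightarrow> nat \<Rightarrow> ('a \<Rightarrow> nat) \<Rightarrow> 'a \<Rightarrow> nat list" where
  "color_code V E k f v = map (\<lambda>i. setdist E v {x\<in>V. f x = i}) [1..<k+1]"

definition locating_coloring :: "'a set \<Rightarrow> ('a \<times> 'a) set \<Rightarrow> nat \<Rightarrow> ('a \<Rightarrow> nat) \<Rightarrow> bool" where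
  "locating_coloring V E k f \<longleftrightarrow> proper_coloring V E k f \<and> inj_on (color_code V E k f) V"

definition locating_chromatic_number :: "'a set \<Rightarrow> ('a \<times> 'a) set \<Rightarrow> nat" where
  "locating_chromatic_number V E = (LEAST k. \<exists>f. locating_coloring V E k f)"

text \<open>Friendship graph Fr_n, n = 2t+1: center 0, edges {2i-1, 2i} for i = 1..t.\<close>
definition fr_V :: "nat \<Rightarrow> nat set" where
  "fr_V t = {0..2*t}"

definition fr_E :: "nat \<Rightarrow> (nat \<times> nat) set" where
  "fr_E t = {(0, i) | i. i \<in> {1..2*t}} \<union> {(i, 0) | i. i \<in> {1..2*t}}
          \<union> {(2*i-1, 2*i) | i. i \<in> {1..t}} \<union> {(2*i, 2*i-1) | i. i \<in> {1..t}}"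

end

theory Submission
  imports Defs
begin

text \<open>Fr has diameter 2, so a proper coloring is locating iff no two vertices share both their
  color and the set of colors of their neighbours. A leaf sees only the center and its partner,
  so for a locating coloring the color pairs of the \<open>t\<close> blades are distinct 2-subsets of the
  \<open>k - 1\<close> colors not used at the center, whence \<open>t \<le> (k - 1) choose 2\<close>. Conversely, with
  \<open>m\<close> minimal subject to \<open>t \<le> m choose 2\<close> we have \<open>m - 1 \<le> t\<close>, so one can choose \<open>t\<close>
  distinct pairs from \<open>m\<close> colors that cover all of them; coloring the blades by these pairs
  and the center by a new color is locating.\<close>

definition diameter_le_2 :: "'a set \<Rightarrow> ('a \<times> 'a) set \<Rightarrow> bool" where
  "diameter_le_2 V E \<longleftrightarrow> (\<forall>u\<in>V. \<forall>v\<in>V. u = v \<or> (u, v) \<in> E \<or> (\<exists>x. (u, x) \<in> E \<and> (x, v) \<in> E))"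

definition nbr_colors :: "'a set \<Rightarrow> ('a \<times> 'a) set \<Rightarrow> ('a \<Rightarrow> nat) \<Rightarrow> 'a \<Rightarrow> nat set" where
  "nbr_colors V E f v = f ` {x \<in> V. (v, x) \<in> E}"

lemma gdist_eq_if_walk_le_2:
  assumes "u = v \<or> (u, v) \<in> E \<or> (\<exists>x. (u, x) \<in> E \<and> (x, v) \<in> E)"
  shows "gdist E u v = (if u = v then 0 else if (u, v) \<in> E then 1 else 2)"
    (is "_ = ?d")
proof -
  have walk_2: "(u, v) \<in> E ^^ 2 \<longleftrightarrow> (\<exists>x. (u, x) \<in> E \<and> (x, v) \<in> E)"
    by (auto simp: numeral_2_eq_2 relpow_commute)
  have "(u, v) \<in> E ^^ ?d"
    using assms walk_2 by auto
  moreover have "?d \<le> n" if "(u, v) \<in> E ^^ n" for n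
    using that by (cases n; cases "n - 1") auto
  ultimately show ?thesis
    unfolding gdist_def by (rule Least_equality)
qed

lemma setdist_eq_if_diameter_le_2:
  assumes "diameter_le_2 V E" "v \<in> V" "S \<subseteq> V" "finite S" "S \<noteq> {}"
  shows "setdist E v S = (if v \<in> S then 0 else if \<exists>x\<in>S. (v, x) \<in> E then 1 else 2)"
    (is "_ = ?d")
proof -
  define h where "h x = (if v = x then 0 else if (v, x) \<in> E then 1 else 2 :: nat)" for x
  have "setdist E v S = Min (h ` S)"
    unfolding setdist_def h_def using assms(1-3)
    by (intro arg_cong[where f = Min] image_cong refl gdist_eq_if_walk_le_2)
      (auto simp: diameter_le_2_def)
  also have "Min (h ` S) = ?d"
  proof (rule Min_eqI)
    show "?d \<le> y" if "y \<in> h ` S" for y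
      using that unfolding h_def by auto
    obtain x where "x \<in> S"
      using assms(5) by blast
    then show "?d \<in> h ` S"
      unfolding h_def by (auto intro: rev_image_eqI)
  qed (use assms(4) in simp)
  finally show ?thesis .
qed

lemma setdist_color_class:
  assumes "finite V" "diameter_le_2 V E" "proper_coloring V E k f" "v \<in> V" "i \<in> {1..k}"
  shows "setdist E v {x \<in> V. f x = i} = (if f v = i then 0 else if i \<in> nbr_colors V E f v then 1 else 2)"
proof -
  let ?C = "{x \<in> V. f x = i}"
  have "i \<in> f ` V"
    using assms(3,5) unfolding proper_coloring_def by simp
  then have "?C \<noteq> {}"
    by auto
  then have "setdist E v ?C = (if v \<in> ?C then 0 else if \<exists>x\<in>?C. (v, x) \<in> E then 1 else 2)"
    using assms(1) by (intro setdist_eq_if_diameter_le_2[OF assms(2,4)]) simp_all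
  moreover have "v \<in> ?C \<longleftrightarrow> f v = i"
    using assms(4) by blast
  moreover have "(\<exists>x\<in>?C. (v, x) \<in> E) \<longleftrightarrow> i \<in> nbr_colors V E f v"
    unfolding nbr_colors_def by blast
  ultimately show ?thesis
    by (simp only:)
qed

lemma distance_profile_eq_iff:
  assumes "a \<in> I" "b \<in> I" "N \<subseteq> I" "M \<subseteq> I" "a \<notin> N" "b \<notin> M"
  shows "(\<forall>i\<in>I. (if a = i then 0 else if i \<in> N then 1 else 2 :: nat)
                = (if b = i then 0 else if i \<in> M then 1 else 2))
         \<longleftrightarrow> a = b \<and> N = M"
proof
  assume same: "\<forall>i\<in>I. (if a = i then 0 else if i \<in> N then 1 else 2 :: nat)
                          = (if b = i then 0 else if i \<in> M then 1 else 2)"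
  then have "a = b"
    using assms(1) by (auto split: if_splits)
  moreover have "i \<in> N \<longleftrightarrow> i \<in> M" if "i \<in> I" for i
    using same[rule_format, OF that] \<open>a = b\<close> assms(5,6) by (auto split: if_splits)
  then have "N = M"
    using assms(3,4) by blast
  ultimately show "a = b \<and> N = M" ..
qed auto

lemma color_code_eq_iff:
  assumes "finite V" "diameter_le_2 V E" "proper_coloring V E k f" "v \<in> V" "w \<in> V"
  shows "color_code V E k f v = color_code V E k f w
         \<longleftrightarrow> f v = f w \<and> nbr_colors V E f v = nbr_colors V E f w"
proof -
  have colors: "f u \<in> {1..k}" "nbr_colors V E f u \<subseteq> {1..k}" "f u \<notin> nbr_colors V E f u"
    if "u \<in> V" for u
    using assms(3) that unfolding proper_coloring_def nbr_colors_def by auto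
  have "set [1..<k+1] = {1..k}"
    by auto
  then have "color_code V E k f v = color_code V E k f w
      \<longleftrightarrow> (\<forall>i\<in>{1..k}. setdist E v {x \<in> V. f x = i} = setdist E w {x \<in> V. f x = i})"
    unfolding color_code_def map_eq_conv by simp
  also have "\<dots> \<longleftrightarrow> (\<forall>i\<in>{1..k}.
        (if f v = i then 0 else if i \<in> nbr_colors V E f v then 1 else 2 :: nat)
      = (if f w = i then 0 else if i \<in> nbr_colors V E f w then 1 else 2))"
    using setdist_color_class[OF assms(1-3)] assms(4,5) by (intro ball_cong) simp_all
  also have "\<dots> \<longleftrightarrow> f v = f w \<and> nbr_colors V E f v = nbr_colors V E f w"
    using assms(4,5) colors by (intro distance_profile_eq_iff)
  finally show ?thesis .
qed

text \<open>In a graph of diameter at most 2 every entry of a color code is 0, 1 or 2, so the code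
  of a vertex records exactly its own color and the set of colors of its neighbours.\<close>

lemma locating_coloring_iff_inj_nbr_colors:
  assumes "finite V" "diameter_le_2 V E"
  shows "locating_coloring V E k f
         \<longleftrightarrow> proper_coloring V E k f \<and> inj_on (\<lambda>v. (f v, nbr_colors V E f v)) V"
  using color_code_eq_iff[OF assms] unfolding locating_coloring_def inj_on_def by auto

lemma two_element_set_obtain_less:
  fixes B :: "'a :: linorder set"
  assumes "card B = 2"
  obtains x y where "B = {x, y}" "x < y"
  using assms unfolding card_2_iff by (metis insert_commute neqE)

lemma diff_one_le_choose_two: "n - 1 \<le> n choose 2"
  by (cases n) (simp_all add: numeral_2_eq_2)

text \<open>The \<open>b - a\<close> pairs \<open>{j, j + 1}\<close> already cover \<open>{a..b}\<close>; the remaining pairs are arbitrary.\<close>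

lemma two_subsets_covering_interval:
  fixes a b t :: nat
  assumes "a < b" "b - a \<le> t" "t \<le> (Suc b - a) choose 2"
  obtains S where "S \<subseteq> {B. B \<subseteq> {a..b} \<and> card B = 2}" "card S = t" "\<Union>S = {a..b}"
proof -
  let ?P = "{B. B \<subseteq> {a..b} \<and> card B = 2}"
  define path where "path = (\<lambda>j. {j, Suc j}) ` {a..<b}"
  have "inj_on (\<lambda>j. {j, Suc j}) {a..<b}"
    by (rule inj_onI) (auto simp: doubleton_eq_iff)
  then have card_path: "card path = b - a"
    unfolding path_def by (simp add: card_image)
  have path_P: "path \<subseteq> ?P"
    unfolding path_def by auto
  have path_covers: "\<Union>path = {a..b}"
  proof
    show "{a..b} \<subseteq> \<Union>path"
    proof
      fix c assume c: "c \<in> {a..b}"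
      obtain j where "j \<in> {a..<b}" "c \<in> {j, Suc j}"
      proof (cases "c < b")
        case True
        then show thesis
          using c by (intro that[of c]) auto
      next
        case False
        then show thesis
          using c assms(1) by (intro that[of "b - 1"]) auto
      qed
      then show "c \<in> \<Union>path"
        unfolding path_def by blast
    qed
  qed (auto simp: path_def)
  have "finite ?P"
    by (rule finite_subset[of _ "Pow {a..b}"]) auto
  moreover have "card ?P = (Suc b - a) choose 2"
    by (simp add: n_subsets)
  ultimately have "t - (b - a) \<le> card (?P - path)"
    using assms(3) card_path path_P by (simp add: card_Diff_subset finite_subset)
  then obtain T where T: "T \<subseteq> ?P - path" "card T = t - (b - a)" "finite T"
    by (rule obtain_subset_with_card_n)
  show thesis
  proof
    show "path \<union> T \<subseteq> ?P"
      using path_P T(1) by blast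
    show "card (path \<union> T) = t"
      using T card_path assms(2) unfolding path_def by (subst card_Un_disjoint) auto
    show "\<Union>(path \<union> T) = {a..b}"
      using path_covers T(1) by blast
  qed
qed

text \<open>The leaves \<open>2*i - 1\<close> and \<open>2*i\<close> of \<open>Fr\<close> are partners and span the blade (triangle) \<open>i\<close>.\<close>

definition partner :: "nat \<Rightarrow> nat" where
  "partner p = (if odd p then p + 1 else p - 1)"

definition blade :: "nat \<Rightarrow> nat" where
  "blade p = (p + 1) div 2"

lemma fr_E_iff:
  "(u, v) \<in> fr_E t \<longleftrightarrow>
     (u = 0 \<and> v \<in> {1..2*t}) \<or> (v = 0 \<and> u \<in> {1..2*t}) \<or> (u \<in> {1..2*t} \<and> v = partner u)"
proof -
  have "(\<exists>i\<in>{1..t}. (u, v) = (2*i - 1, 2*i) \<or> (u, v) = (2*i, 2*i - 1))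
        \<longleftrightarrow> u \<in> {1..2*t} \<and> v = partner u"
  proof
    assume "u \<in> {1..2*t} \<and> v = partner u"
    then show "\<exists>i\<in>{1..t}. (u, v) = (2*i - 1, 2*i) \<or> (u, v) = (2*i, 2*i - 1)"
      unfolding partner_def atLeastAtMost_iff
      by (intro bexI[of _ "(u + 1) div 2"]) (simp only: prod.inject atLeastAtMost_iff; presburger)+
  qed (auto simp: partner_def)
  then show ?thesis
    unfolding fr_E_def by blast
qed

lemma
  assumes "p \<in> {1..2*t}"
  shows partner_mem: "partner p \<in> {1..2*t}"
    and partner_partner: "partner (partner p) = p"
    and blade_partner: "blade (partner p) = blade p"
    and blade_mem: "blade p \<in> {1..t}"
    and odd_partner_iff: "odd (partner p) \<longleftrightarrow> even p"
  using assms unfolding partner_def blade_def atLeastAtMost_iff by presburger+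

lemma blade_eq_iff:
  assumes "p \<in> {1..2*t}" "q \<in> {1..2*t}"
  shows "blade q = blade p \<longleftrightarrow> q = p \<or> q = partner p"
proof -
  have "x = 2 * blade x - 1 \<and> odd x \<or> x = 2 * blade x \<and> even x" if "x \<in> {1..2*t}" for x
    using that unfolding blade_def atLeastAtMost_iff by presburger
  from this[OF assms(1)] this[OF assms(2)] show ?thesis
    using blade_partner[OF assms(1)] unfolding partner_def by auto
qed

lemma
  assumes "i \<in> {1..t}"
  shows first_leaf_mem: "2*i - 1 \<in> {1..2*t}"
    and partner_first_leaf: "partner (2*i - 1) = 2*i"
    and blade_first_leaf: "blade (2*i - 1) = i"
  using assms unfolding partner_def blade_def atLeastAtMost_iff by presburger+

lemma fr_V_eq: "fr_V t = insert 0 {1..2*t}"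
  unfolding fr_V_def by auto

lemma fr_diameter_le_2: "diameter_le_2 (fr_V t) (fr_E t)"
  unfolding diameter_le_2_def fr_V_def by (auto simp: fr_E_iff)

lemma fr_nbr_colors_leaf:
  assumes "p \<in> {1..2*t}"
  shows "nbr_colors (fr_V t) (fr_E t) f p = {f 0, f (partner p)}"
proof -
  have "(p, x) \<in> fr_E t \<longleftrightarrow> x = 0 \<or> x = partner p" for x
    using assms unfolding fr_E_iff by auto
  then have "{x \<in> fr_V t. (p, x) \<in> fr_E t} = {0, partner p}"
    using partner_mem[OF assms] unfolding fr_V_def by auto
  then show ?thesis
    unfolding nbr_colors_def by (simp only: image_insert image_empty)
qed

lemma fr_proper_coloring_leaf:
  assumes "proper_coloring (fr_V t) (fr_E t) k f" "p \<in> {1..2*t}"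
  shows "f p \<in> {1..k} - {f 0}" "f p \<noteq> f (partner p)"
proof -
  have "f ` fr_V t = {1..k}" and edge: "\<And>u v. (u, v) \<in> fr_E t \<Longrightarrow> f u \<noteq> f v"
    using assms(1) unfolding proper_coloring_def by auto
  moreover have "p \<in> fr_V t"
    using assms(2) unfolding fr_V_def by simp
  moreover have "f 0 \<noteq> f p" "f p \<noteq> f (partner p)"
    using assms(2) by (auto intro!: edge simp: fr_E_iff)
  ultimately show "f p \<in> {1..k} - {f 0}" "f p \<noteq> f (partner p)"
    by auto
qed

lemma fr_locating_coloring_leaf_eq:
  assumes "locating_coloring (fr_V t) (fr_E t) k f" "p \<in> {1..2*t}" "q \<in> {1..2*t}"
    and "f p = f q" "f (partner p) = f (partner q)"
  shows "p = q"
proof (rule inj_onD)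
  show "inj_on (\<lambda>v. (f v, nbr_colors (fr_V t) (fr_E t) f v)) (fr_V t)"
    using assms(1) locating_coloring_iff_inj_nbr_colors[OF _ fr_diameter_le_2] by (auto simp: fr_V_def)
  show "(f p, nbr_colors (fr_V t) (fr_E t) f p) = (f q, nbr_colors (fr_V t) (fr_E t) f q)"
    using assms(2-5) by (simp add: fr_nbr_colors_leaf)
  show "p \<in> fr_V t" "q \<in> fr_V t"
    using assms(2,3) unfolding fr_V_def by auto
qed

lemma fr_locating_coloring_inj_blade_colors:
  assumes "locating_coloring (fr_V t) (fr_E t) k f"
  shows "inj_on (\<lambda>i. {f (2*i - 1), f (2*i)}) {1..t}"
proof (rule inj_onI)
  fix i j assume i: "i \<in> {1..t}" and j: "j \<in> {1..t}"
    and same: "{f (2*i - 1), f (2*i)} = {f (2*j - 1), f (2*j)}"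
  from same have colors: "f (2*i - 1) = f (2*j - 1) \<and> f (2*i) = f (2*j) \<or> f (2*i - 1) = f (2*j) \<and> f (2*i) = f (2*j - 1)"
    unfolding doubleton_eq_iff .
  note p = first_leaf_mem[OF i] and q = first_leaf_mem[OF j]
  have partners: "partner (2*i - 1) = 2*i" "partner (2*j - 1) = 2*j" "partner (2*j) = 2*j - 1"
    using partner_first_leaf[OF i] partner_first_leaf[OF j] partner_partner[OF q] by simp_all
  note leaf_eq = fr_locating_coloring_leaf_eq[OF assms]
  from colors show "i = j"
  proof
    assume "f (2*i - 1) = f (2*j - 1) \<and> f (2*i) = f (2*j)"
    then have "2*i - 1 = 2*j - 1"
      using leaf_eq[OF p q] unfolding partners by blast
    then show "i = j"
      using i j by simp
  next
    assume "f (2*i - 1) = f (2*j) \<and> f (2*i) = f (2*j - 1)"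
    then have "2*i - 1 = 2*j"
      using leaf_eq[OF p partner_mem[OF q]] unfolding partners by blast
    then show "i = j"
      using i by presburger
  qed
qed

lemma fr_locating_coloring_lower_bound:
  assumes "locating_coloring (fr_V t) (fr_E t) k f"
  shows "t \<le> (k - 1) choose 2"
proof -
  let ?A = "{1..k} - {f 0}"
  have proper: "proper_coloring (fr_V t) (fr_E t) k f"
    using assms unfolding locating_coloring_def by simp
  have "(\<lambda>i. {f (2*i - 1), f (2*i)}) ` {1..t} \<subseteq> {B. B \<subseteq> ?A \<and> card B = 2}"
  proof (rule image_subsetI)
    fix i assume i: "i \<in> {1..t}"
    note leaf = fr_proper_coloring_leaf[OF proper first_leaf_mem[OF i]]
      and partner_leaf = fr_proper_coloring_leaf[OF proper partner_mem[OF first_leaf_mem[OF i]]]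
    show "{f (2*i - 1), f (2*i)} \<in> {B. B \<subseteq> ?A \<and> card B = 2}"
      using leaf partner_leaf(1) unfolding partner_first_leaf[OF i] by simp
  qed
  then have "card {1..t} \<le> card {B. B \<subseteq> ?A \<and> card B = 2}"
    using fr_locating_coloring_inj_blade_colors[OF assms] by (intro card_inj_on_le) auto
  also have "\<dots> = card ?A choose 2"
    by (simp add: n_subsets)
  also have "card ?A = k - 1"
  proof -
    have "f 0 \<in> {1..k}"
      using proper unfolding proper_coloring_def fr_V_def by (metis atLeastAtMost_iff imageI le0)
    then show ?thesis
      by simp
  qed
  finally show ?thesis
    by simp
qed

text \<open>\<open>Min\<close>/\<open>Max\<close> merely decide which leaf of blade \<open>i\<close> gets which of the two colors in \<open>g i\<close>.\<close>

definition blade_coloring :: "(nat \<Rightarrow> nat set) \<Rightarrow> nat \<Rightarrow> nat" where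
  "blade_coloring g p = (if p = 0 then 1 else if odd p then Min (g (blade p)) else Max (g (blade p)))"

lemma blade_coloring_leaf:
  assumes "p \<in> {1..2*t}" "card (g (blade p)) = 2"
  shows "{blade_coloring g p, blade_coloring g (partner p)} = g (blade p)"
    and "blade_coloring g p \<noteq> blade_coloring g (partner p)"
proof -
  obtain x y where xy: "g (blade p) = {x, y}" "x < y"
    using assms(2) by (rule two_element_set_obtain_less)
  have "partner p \<noteq> 0"
    using partner_mem[OF assms(1)] by simp
  then have "blade_coloring g p = (if odd p then x else y)"
    "blade_coloring g (partner p) = (if odd p then y else x)"
    using assms(1) xy unfolding blade_coloring_def blade_partner[OF assms(1)] odd_partner_iff[OF assms(1)]
    by auto
  then show "{blade_coloring g p, blade_coloring g (partner p)} = g (blade p)"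
    and "blade_coloring g p \<noteq> blade_coloring g (partner p)"
    using xy by auto
qed

lemma blade_coloring_leaf_mem:
  assumes "p \<in> {1..2*t}" "g (blade p) \<subseteq> C" "card (g (blade p)) = 2"
  shows "blade_coloring g p \<in> C"
  using blade_coloring_leaf(1)[of p t g] assms by blast

lemma fr_blade_coloring_proper:
  assumes pairs: "\<And>i. i \<in> {1..t} \<Longrightarrow> g i \<subseteq> {2..m+1} \<and> card (g i) = 2"
    and cover: "(\<Union>i\<in>{1..t}. g i) = {2..m+1}"
  shows "proper_coloring (fr_V t) (fr_E t) (m+1) (blade_coloring g)"
proof -
  let ?f = "blade_coloring g"
  have leaf_color: "?f p \<in> {2..m+1}" if "p \<in> {1..2*t}" for p
    using blade_coloring_leaf_mem[OF that] pairs[OF blade_mem[OF that]] by blast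
  have center: "?f 0 = 1"
    by (simp add: blade_coloring_def)
  have "{2..m+1} \<subseteq> ?f ` {1..2*t}"
  proof
    fix c assume "c \<in> {2..m+1}"
    then obtain i where i: "i \<in> {1..t}" "c \<in> g i"
      using cover by blast
    note p = first_leaf_mem[OF i(1)]
    have "c \<in> {?f (2*i - 1), ?f (partner (2*i - 1))}"
      using i blade_coloring_leaf(1)[OF p] pairs blade_first_leaf[OF i(1)] by simp
    then show "c \<in> ?f ` {1..2*t}"
      using p partner_mem[OF p] by blast
  qed
  moreover have "?f ` {1..2*t} \<subseteq> {2..m+1}"
    using leaf_color by blast
  ultimately have "?f ` fr_V t = insert 1 {2..m+1}"
    unfolding fr_V_eq image_insert center by blast
  also have "insert 1 {2..m+1} = {1..m+1}"
    by auto
  finally have "?f ` fr_V t = {1..m+1}" .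
  moreover have "?f u \<noteq> ?f v" if edge: "(u, v) \<in> fr_E t" for u v
  proof -
    consider "u = 0" "v \<in> {1..2*t}" | "v = 0" "u \<in> {1..2*t}" | "u \<in> {1..2*t}" "v = partner u"
      using edge unfolding fr_E_iff by blast
    then show ?thesis
    proof cases
      case 3
      then show ?thesis
        using blade_coloring_leaf(2) pairs[OF blade_mem] by blast
    qed (use leaf_color center in fastforce)+
  qed
  ultimately show ?thesis
    unfolding proper_coloring_def by blast
qed

lemma fr_blade_coloring_locating:
  assumes inj: "inj_on g {1..t}"
    and pairs: "\<And>i. i \<in> {1..t} \<Longrightarrow> g i \<subseteq> {2..m+1} \<and> card (g i) = 2"
    and cover: "(\<Union>i\<in>{1..t}. g i) = {2..m+1}"
  shows "locating_coloring (fr_V t) (fr_E t) (m+1) (blade_coloring g)"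
proof -
  let ?V = "fr_V t" and ?E = "fr_E t" and ?f = "blade_coloring g"
  have leaf: "{?f p, ?f (partner p)} = g (blade p)" "?f p \<noteq> ?f (partner p)"
    if "p \<in> {1..2*t}" for p
    using blade_coloring_leaf[OF that] pairs[OF blade_mem[OF that]] by simp_all
  have leaf_color: "?f p \<noteq> 1" if "p \<in> {1..2*t}" for p
    using blade_coloring_leaf_mem[OF that] pairs[OF blade_mem[OF that]] by fastforce
  have center: "?f 0 = 1"
    by (simp add: blade_coloring_def)
  have "u = v"
    if "u \<in> ?V" "v \<in> ?V" and same: "?f u = ?f v" "nbr_colors ?V ?E ?f u = nbr_colors ?V ?E ?f v"
    for u v
  proof (cases "u = 0 \<or> v = 0")
    case True
    then show ?thesis
      using that leaf_color center unfolding fr_V_eq by fastforce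
  next
    case False
    then have u: "u \<in> {1..2*t}" and v: "v \<in> {1..2*t}"
      using that(1,2) unfolding fr_V_eq by auto
    have "{1, ?f (partner u)} = {1, ?f (partner v)}"
      using same(2) center unfolding fr_nbr_colors_leaf[OF u] fr_nbr_colors_leaf[OF v] by simp
    then have "?f (partner u) = ?f (partner v)"
      using leaf_color[OF partner_mem[OF u]] leaf_color[OF partner_mem[OF v]]
      by (auto simp: doubleton_eq_iff)
    then have "g (blade u) = g (blade v)"
      using same(1) leaf(1)[OF u] leaf(1)[OF v] by simp
    then have "blade v = blade u"
      using inj blade_mem[OF u] blade_mem[OF v] by (simp add: inj_on_eq_iff)
    then have "v = u \<or> v = partner u"
      using blade_eq_iff[OF u v] by simp
    then show "u = v"
      using same(1) leaf(2)[OF u] by auto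
  qed
  then show ?thesis
    using fr_blade_coloring_proper[OF pairs cover] locating_coloring_iff_inj_nbr_colors[OF _ fr_diameter_le_2]
    unfolding inj_on_def fr_V_def by auto
qed

lemma fr_locating_coloring_exists:
  assumes "2 \<le> m" "m - 1 \<le> t" "t \<le> m choose 2"
  shows "\<exists>f. locating_coloring (fr_V t) (fr_E t) (m+1) f"
proof -
  obtain S where S: "S \<subseteq> {B. B \<subseteq> {2..m+1} \<and> card B = 2}" "card S = t" "\<Union>S = {2..m+1}"
    using two_subsets_covering_interval[of 2 "m+1" t] assms by auto
  have "finite S"
    using S(1) by (rule finite_subset) (rule finite_subset[of _ "Pow {2..m+1}"], auto)
  then obtain g where g: "bij_betw g {1..t} S"
    using ex_bij_betw_nat_finite_1 S(2) by blast
  have "locating_coloring (fr_V t) (fr_E t) (m+1) (blade_coloring g)"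
  proof (rule fr_blade_coloring_locating)
    show "inj_on g {1..t}"
      using g by (rule bij_betw_imp_inj_on)
    show "g i \<subseteq> {2..m+1} \<and> card (g i) = 2" if "i \<in> {1..t}" for i
      using S(1) bij_betwE[OF g] that by blast
    show "(\<Union>i\<in>{1..t}. g i) = {2..m+1}"
      using S(3) bij_betw_imp_surj_on[OF g] by simp
  qed
  then show ?thesis
    by blast
qed

theorem proposition2:
  fixes t n :: nat
  assumes "t > 0" and "n = 2*t + 1"
  shows "locating_chromatic_number (fr_V t) (fr_E t) = 1 + (LEAST k::nat. t \<le> k choose 2)"
proof -
  define m where "m = (LEAST k::nat. t \<le> k choose 2)"
  have "t \<le> Suc t choose 2"
    using diff_one_le_choose_two[of "Suc t"] by simp
  then have upper: "t \<le> m choose 2"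
    unfolding m_def by (rule LeastI)
  have minimal: "t \<le> k choose 2 \<Longrightarrow> m \<le> k" for k
    unfolding m_def by (rule Least_le)
  have "2 \<le> m"
    using upper assms(1) by (metis binomial_eq_0 not_le not_less0)
  moreover have "m - 1 \<le> t"
    using \<open>2 \<le> m\<close> minimal[of "m - 1"] diff_one_le_choose_two[of "m - 1"] by linarith
  ultimately have "\<exists>f. locating_coloring (fr_V t) (fr_E t) (m + 1) f"
    using upper by (rule fr_locating_coloring_exists)
  moreover have "m + 1 \<le> k" if "\<exists>f. locating_coloring (fr_V t) (fr_E t) k f" for k
  proof -
    have bound: "t \<le> (k - 1) choose 2"
      using that fr_locating_coloring_lower_bound by blast
    then have "k \<noteq> 0"
      using assms(1) by (intro notI) (simp add: binomial_eq_0)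
    then show ?thesis
      using minimal[OF bound] by linarith
  qed
  ultimately have "locating_chromatic_number (fr_V t) (fr_E t) = m + 1"
    unfolding locating_chromatic_number_def by (rule Least_equality)
  then show ?thesis
    unfolding m_def by simp
qed

end
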